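(* Let $\Gamma=(U\cup V,E)$ be a $3$-regular bipartite graph and let $\hat\Gamma$, $\eta$, $\eta'$, $\mathrm{sgn}$ and $\mu(F,f)$ be as described in the context. For any $2$-factor $F$ of $\Gamma$, any function $f:F\to\{0,1\}$ and any perfect matchings $\mu_1,\mu_2\in\mu(F,f)$, we have $\mathrm{sgn}(\mu_1)=\mathrm{sgn}(\mu_2)$.
   Context: Construction of $\hat\Gamma$: for each vertex $v$ of $\Gamma$ with neighbours $x,y,z$, there are four inner vertices $a_{v,S}$, one for each subset $S\subseteq\{x,y,z\}$ of even size (the set $I_v$), and six outer vertices $b_{v,u,0},b_{v,u,1}$ for $u\in\{x,y,z\}$ (the set $O_v$). Within the gadget, $a_{v,S}$ is adjacent to $b_{v,u,1}$ if $u\in S$ and to $b_{v,u,0}$ if $u\notin S$. For each edge $e=\{u,v\}\in E$ and $i\in\{0,1\}$ there is an edge $e_i$ joining $b_{v,u,i}$ and $b_{u,v,i}$. No other edges. Let $X=\bigcup_{v\in U}I_v\cup\bigcup_{v\in V}O_v$, $Y=\bigcup_{v\in V}I_v\cup\bigcup_{v\in U}O_v$, $n=|X|=|Y|=10|U|$, and fix bijections $\eta:X\to[n]$, $\eta':Y\to[n]$. A perfect matching is a bijection $\mu:X\to Y$ with $\mu(x)$ adjacent to $x$ for all $x$; $\mathrm{sgn}(\mu)$ is the sign of the permutation $\eta'\circ\mu\circ\eta^{-1}$ of $[n]$. A perfect matching $\mu$ is uniform if for every $e\in E$ at most one of $e_0,e_1$ is in $\mu$; then $F_\mu$ is the set of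 $e\in E$ with exactly one of $e_0,e_1$ in $\mu$, and $f_\mu(e)=i$ iff $e_i\in\mu$. A $2$-factor of $\Gamma$ is a set $F\subseteq E$ such that every vertex is incident to exactly two edges of $F$. $\mu(F,f)$ is the set of uniform perfect matchings $\mu$ with $F_\mu=F$ and $f_\mu=f$. *)

theory Defs
  imports "HOL-Combinatorics.Permutations"
begin

(* Vertices of \<Gamma>-hat:  Inner v S = a_{v,S};  Outer v u i = b_{v,u,i}  (i: False = 0, True = 1) *)
datatype 'v hvert = Inner 'v "'v set" | Outer 'v 'v bool

definition nbrs :: "'v set set \<Rightarrow> 'v \<Rightarrow> 'v set" where
  "nbrs E v = {u. {u, v} \<in> E}"

definition cubic_bipartite :: "'v set \<Rightarrow> 'v set \<Rightarrow> 'v set set \<Rightarrow> bool" where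
  "cubic_bipartite U V E \<longleftrightarrow> finite U \<and> finite V \<and> U \<inter> V = {} \<and>
     E \<subseteq> {{u, v} | u v. u \<in> U \<and> v \<in> V} \<and>
     (\<forall>w \<in> U \<union> V. card (nbrs E w) = 3)"

definition inner_set :: "'v set set \<Rightarrow> 'v \<Rightarrow> 'v hvert set" where
  "inner_set E v = {Inner v S | S. S \<subseteq> nbrs E v \<and> even (card S)}"

definition outer_set :: "'v set set \<Rightarrow> 'v \<Rightarrow> 'v hvert set" where
  "outer_set E v = {Outer v u i | u i. u \<in> nbrs E v}"

definition hat_adj :: "'v set set \<Rightarrow> 'v hvert \<Rightarrow> 'v hvert \<Rightarrow> bool" where
  "hat_adj E x y \<longleftrightarrow>
     (\<exists>v S u i. {x, y} = {Inner v S, Outer v u i} \<and> Inner v S \<in> inner_set E v \<and>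
                u \<in> nbrs E v \<and> (i \<longleftrightarrow> u \<in> S)) \<or>
     (\<exists>u v i. {u, v} \<in> E \<and> {x, y} = {Outer v u i, Outer u v i})"

definition XX :: "'v set \<Rightarrow> 'v set \<Rightarrow> 'v set set \<Rightarrow> 'v hvert set" where
  "XX U V E = (\<Union>v\<in>U. inner_set E v) \<union> (\<Union>v\<in>V. outer_set E v)"

definition YY :: "'v set \<Rightarrow> 'v set \<Rightarrow> 'v set set \<Rightarrow> 'v hvert set" where
  "YY U V E = (\<Union>v\<in>V. inner_set E v) \<union> (\<Union>v\<in>U. outer_set E v)"

definition perfect_matching ::
  "'v set \<Rightarrow> 'v set \<Rightarrow> 'v set set \<Rightarrow> ('v hvert \<Rightarrow> 'v hvert) \<Rightarrow> bool" where
  "perfect_matching U V E \<mu> \<longleftrightarrow> bij_betw \<mu> (XX U V E) (YY U V E) \<and>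
     (\<forall>x \<in> XX U V E. hat_adj E x (\<mu> x))"

(* e_i \<in> \<mu>, for e = {u,v}; the edge e_i joins Outer v u i and Outer u v i *)
definition edge_in ::
  "'v set \<Rightarrow> 'v set \<Rightarrow> 'v set set \<Rightarrow> ('v hvert \<Rightarrow> 'v hvert) \<Rightarrow> 'v set \<Rightarrow> bool \<Rightarrow> bool" where
  "edge_in U V E \<mu> e i \<longleftrightarrow> (\<exists>u v. e = {u, v} \<and> u \<noteq> v \<and>
     ((Outer v u i \<in> XX U V E \<and> \<mu> (Outer v u i) = Outer u v i) \<or>
      (Outer u v i \<in> XX U V E \<and> \<mu> (Outer u v i) = Outer v u i)))"

definition uniform ::
  "'v set \<Rightarrow> 'v set \<Rightarrow> 'v set set \<Rightarrow> ('v hvert \<Rightarrow> 'v hvert) \<Rightarrow> bool" where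
  "uniform U V E \<mu> \<longleftrightarrow> perfect_matching U V E \<mu> \<and>
     (\<forall>e \<in> E. \<not> (edge_in U V E \<mu> e False \<and> edge_in U V E \<mu> e True))"

definition F_of ::
  "'v set \<Rightarrow> 'v set \<Rightarrow> 'v set set \<Rightarrow> ('v hvert \<Rightarrow> 'v hvert) \<Rightarrow> 'v set set" where
  "F_of U V E \<mu> = {e \<in> E. edge_in U V E \<mu> e False \<or> edge_in U V E \<mu> e True}"

(* \<mu>(F,f): f_\<mu> = f on F means e_{f e} \<in> \<mu> for every e \<in> F *)
definition mu_set ::
  "'v set \<Rightarrow> 'v set \<Rightarrow> 'v set set \<Rightarrow> 'v set set \<Rightarrow> ('v set \<Rightarrow> bool) \<Rightarrow> ('v hvert \<Rightarrow> 'v hvert) set" where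
  "mu_set U V E F f = {\<mu>. uniform U V E \<mu> \<and> F_of U V E \<mu> = F \<and>
     (\<forall>e \<in> F. edge_in U V E \<mu> e (f e))}"

definition two_factor :: "'v set \<Rightarrow> 'v set \<Rightarrow> 'v set set \<Rightarrow> 'v set set \<Rightarrow> bool" where
  "two_factor U V E F \<longleftrightarrow> F \<subseteq> E \<and> (\<forall>w \<in> U \<union> V. card {e \<in> F. w \<in> e} = 2)"

(* sgn(\<mu>) = sign of \<eta>' \<circ> \<mu> \<circ> \<eta>^{-1} as a permutation of [n] = {1..n} (identity outside) *)
definition match_sign ::
  "'v set \<Rightarrow> 'v set \<Rightarrow> 'v set set \<Rightarrow> ('v hvert \<Rightarrow> nat) \<Rightarrow> ('v hvert \<Rightarrow> nat)
     \<Rightarrow> ('v hvert \<Rightarrow> 'v hvert) \<Rightarrow> int" where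
  "match_sign U V E \<eta> \<eta>' \<mu> =
     sign (\<lambda>k. if k \<in> {1..card (XX U V E)} then \<eta>' (\<mu> (inv_into (XX U V E) \<eta> k)) else k)"

end

theory Submission
  imports Defs
begin

text \<open>
  Let \<open>{x, v}\<close> and \<open>{y, v}\<close> be the two edges of \<open>F\<close> at a vertex \<open>v\<close>, and \<open>z\<close> its third
  neighbour. Every matching in \<open>\<mu>(F, f)\<close> contains \<open>e\<^sub>i\<close> with \<open>i = f e\<close> for both these
  edges \<open>e\<close>, so the four inner vertices of the gadget at \<open>v\<close> are matched with its
  four other outer vertices. The inner vertex adjacent to both used outer vertices is forced
  onto an outer vertex at \<open>z\<close>, and the remaining six vertices form a hexagon, which has exactly
  two perfect matchings. Hence \<open>inv \<mu>1 \<circ> \<mu>2\<close> is the identity or a 3-cycle on every gadget,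
  so its cube is the identity and it is an even permutation.
\<close>

section \<open>Signs of relabelled bijections\<close>

lemma sign_eq_1_if_cube_id:
  assumes "permutation t" and "t ^^ 3 = id"
  shows "sign t = 1"
proof -
  have "sign t = sign (t ^^ 3)"
    using assms(1) by (simp add: numeral_3_eq_3 sign_compose permutation_compose)
  with assms(2) show ?thesis by simp
qed

lemma relabelled_permutes:
  assumes "bij_betw \<eta> X N" and "bij_betw \<eta>' Y N" and "bij_betw \<mu> X Y"
  shows "(\<lambda>k. if k \<in> N then \<eta>' (\<mu> (inv_into X \<eta> k)) else k) permutes N"
proof (rule bij_imp_permutes)
  have "bij_betw (\<eta>' \<circ> \<mu> \<circ> inv_into X \<eta>) N N"
    using bij_betw_trans[OF bij_betw_trans[OF bij_betw_inv_into[OF assms(1)] assms(3)] assms(2)]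
    by (simp add: comp_assoc)
  then show "bij_betw (\<lambda>k. if k \<in> N then \<eta>' (\<mu> (inv_into X \<eta> k)) else k) N N"
    by (rule bij_betw_cong[THEN iffD1, rotated]) auto
qed auto

lemma sign_eq_if_cube_id_quotient:
  assumes P1: "P1 permutes N" and P2: "P2 permutes N" and "finite N"
    and "(inv P1 \<circ> P2) ^^ 3 = id"
  shows "sign P1 = sign P2"
proof -
  define t where "t = inv P1 \<circ> P2"
  have t: "t permutes N"
    unfolding t_def using P1 P2 by (simp add: permutes_compose permutes_inv)
  then have "sign t = 1"
    using assms(3,4) unfolding t_def[symmetric]
    by (intro sign_eq_1_if_cube_id) (auto simp: permutes_imp_permutation)
  moreover have "P2 = P1 \<circ> t"
    unfolding t_def using permutes_inverses(1)[OF P1] by (auto simp: fun_eq_iff)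
  ultimately show ?thesis
    using t P1 \<open>finite N\<close> by (simp add: sign_compose permutes_imp_permutation)
qed

lemma inv_into_comp_bij_betw:
  assumes "bij_betw \<mu>1 X Y" and "bij_betw \<mu>2 X Y" and "w \<in> X"
  shows "inv_into X \<mu>1 (\<mu>2 w) \<in> X" and "\<mu>1 (inv_into X \<mu>1 (\<mu>2 w)) = \<mu>2 w"
proof -
  have "\<mu>2 w \<in> \<mu>1 ` X"
    using assms by (metis bij_betw_apply bij_betw_imp_surj_on)
  then show "inv_into X \<mu>1 (\<mu>2 w) \<in> X" "\<mu>1 (inv_into X \<mu>1 (\<mu>2 w)) = \<mu>2 w"
    by (auto intro: inv_into_into f_inv_into_f)
qed

lemma inv_relabelled_eq:
  fixes \<mu>1 \<mu>2 :: "'a \<Rightarrow> 'b"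
  assumes \<eta>: "bij_betw \<eta> X N" and \<eta>': "bij_betw \<eta>' Y N"
    and \<mu>1: "bij_betw \<mu>1 X Y" and \<mu>2: "bij_betw \<mu>2 X Y" and w: "w \<in> X"
  shows "inv (\<lambda>k. if k \<in> N then \<eta>' (\<mu>1 (inv_into X \<eta> k)) else k) (\<eta>' (\<mu>2 w)) =
         \<eta> (inv_into X \<mu>1 (\<mu>2 w))"
proof -
  define P1 where "P1 k = (if k \<in> N then \<eta>' (\<mu>1 (inv_into X \<eta> k)) else k)" for k
  have "P1 permutes N"
    unfolding P1_def[abs_def] using relabelled_permutes[OF \<eta> \<eta>' \<mu>1] .
  have \<eta>_inj: "inv_into X \<eta> (\<eta> u) = u" and \<eta>N: "\<eta> u \<in> N" if "u \<in> X" for u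
    using that \<eta> by (auto simp: bij_betw_def)
  have "P1 (\<eta> (inv_into X \<mu>1 (\<mu>2 w))) = \<eta>' (\<mu>2 w)"
    using inv_into_comp_bij_betw[OF \<mu>1 \<mu>2 w] \<eta>_inj \<eta>N by (simp add: P1_def)
  then show ?thesis
    unfolding P1_def[abs_def, symmetric] by (metis \<open>P1 permutes N\<close> permutes_inverses(2))
qed

lemma relabelled_sign_eq:
  fixes \<mu>1 \<mu>2 :: "'a \<Rightarrow> 'b"
  assumes \<eta>: "bij_betw \<eta> X N" and \<eta>': "bij_betw \<eta>' Y N" and "finite N"
    and \<mu>1: "bij_betw \<mu>1 X Y" and \<mu>2: "bij_betw \<mu>2 X Y"
    and cube: "\<And>w. w \<in> X \<Longrightarrow> ((inv_into X \<mu>1 \<circ> \<mu>2) ^^ 3) w = w"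
  shows "sign (\<lambda>k. if k \<in> N then \<eta>' (\<mu>1 (inv_into X \<eta> k)) else k) =
         sign (\<lambda>k. if k \<in> N then \<eta>' (\<mu>2 (inv_into X \<eta> k)) else k)"
proof -
  define P1 where "P1 = (\<lambda>k. if k \<in> N then \<eta>' (\<mu>1 (inv_into X \<eta> k)) else k)"
  define P2 where "P2 = (\<lambda>k. if k \<in> N then \<eta>' (\<mu>2 (inv_into X \<eta> k)) else k)"
  define \<sigma> where "\<sigma> = inv_into X \<mu>1 \<circ> \<mu>2"
  have P1: "P1 permutes N" and P2: "P2 permutes N"
    unfolding P1_def P2_def using relabelled_permutes[OF \<eta> \<eta>'] \<mu>1 \<mu>2 by blast+
  have \<sigma>X: "\<sigma> w \<in> X" and quotient: "inv P1 (P2 (\<eta> w)) = \<eta> (\<sigma> w)" if "w \<in> X" for w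
  proof -
    have "P2 (\<eta> w) = \<eta>' (\<mu>2 w)"
      using that \<eta> by (simp add: P2_def bij_betw_def bij_betw_apply)
    then show "\<sigma> w \<in> X" "inv P1 (P2 (\<eta> w)) = \<eta> (\<sigma> w)"
      using inv_into_comp_bij_betw(1)[OF \<mu>1 \<mu>2 that] inv_relabelled_eq[OF \<eta> \<eta>' \<mu>1 \<mu>2 that]
      unfolding \<sigma>_def P1_def by simp_all
  qed
  have "(inv P1 \<circ> P2) ^^ 3 = id"
  proof
    fix k
    show "((inv P1 \<circ> P2) ^^ 3) k = id k"
    proof (cases "k \<in> N")
      case True
      then obtain w where w: "w \<in> X" "k = \<eta> w"
        using \<eta> by (auto simp: bij_betw_def)
      have "\<sigma> (\<sigma> (\<sigma> w)) = w" using cube[OF w(1)] by (simp add: \<sigma>_def numeral_3_eq_3)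
      then show ?thesis
        using w \<sigma>X quotient by (simp add: numeral_3_eq_3)
    next
      case False
      have "inv P1 \<circ> P2 permutes N" using P1 P2 by (simp add: permutes_compose permutes_inv)
      then have "inv P1 (P2 k) = k" using False by (metis comp_apply permutes_not_in)
      then show ?thesis by (simp add: numeral_3_eq_3)
    qed
  qed
  then show ?thesis
    using sign_eq_if_cube_id_quotient[OF P1 P2 \<open>finite N\<close>] by (simp add: P1_def P2_def)
qed

lemma nbrs_sym: "u \<in> nbrs E v \<longleftrightarrow> v \<in> nbrs E u"
  by (simp add: nbrs_def insert_commute)

lemma cubic_bipartite_nbrs:
  assumes "cubic_bipartite U V E" and "u \<in> nbrs E v"
  shows "v \<in> U \<Longrightarrow> u \<in> V" and "v \<in> V \<Longrightarrow> u \<in> U"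
proof -
  obtain a b where "{u, v} = {a, b}" "a \<in> U" "b \<in> V" "U \<inter> V = {}"
    using assms unfolding cubic_bipartite_def nbrs_def by blast
  then show "v \<in> U \<Longrightarrow> u \<in> V" and "v \<in> V \<Longrightarrow> u \<in> U"
    by (auto simp: doubleton_eq_iff)
qed

lemma Inner_in_XX_iff [simp]:
  "Inner w S \<in> XX U V E \<longleftrightarrow> w \<in> U \<and> S \<subseteq> nbrs E w \<and> even (card S)"
  by (auto simp: XX_def inner_set_def outer_set_def)

lemma Outer_in_XX_iff [simp]: "Outer w u i \<in> XX U V E \<longleftrightarrow> w \<in> V \<and> u \<in> nbrs E w"
  by (auto simp: XX_def inner_set_def outer_set_def)

lemma Inner_in_YY_iff [simp]:
  "Inner w S \<in> YY U V E \<longleftrightarrow> w \<in> V \<and> S \<subseteq> nbrs E w \<and> even (card S)"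
  by (auto simp: YY_def inner_set_def outer_set_def)

lemma hat_adj_InnerD:
  shows "hat_adj E (Inner v S) q \<Longrightarrow> \<exists>u \<in> nbrs E v. q = Outer v u (u \<in> S)"
    and "hat_adj E q (Inner v S) \<Longrightarrow> \<exists>u \<in> nbrs E v. q = Outer v u (u \<in> S)"
  unfolding hat_adj_def by (auto simp: doubleton_eq_iff)

lemma two_factor_nbrs:
  assumes cb: "cubic_bipartite U V E" and tf: "two_factor U V E F" and v: "v \<in> U \<union> V"
  obtains x y z where "nbrs E v = {x, y, z}" "x \<noteq> y" "x \<noteq> z" "y \<noteq> z"
    and "{x, v} \<in> F" and "{y, v} \<in> F"
proof -
  have edge_at_v: "\<exists>x. e = {x, v}" if "e \<in> F" "v \<in> e" for e
  proof -
    have "e \<in> {{a, b} | a b. a \<in> U \<and> b \<in> V}"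
      using that tf cb unfolding two_factor_def cubic_bipartite_def by blast
    then obtain a b where "e = {a, b}" by blast
    then show ?thesis using \<open>v \<in> e\<close> by (auto simp: insert_commute)
  qed
  have "card {e \<in> F. v \<in> e} = 2" using tf v unfolding two_factor_def by blast
  then obtain e1 e2 where e12: "{e \<in> F. v \<in> e} = {e1, e2}" "e1 \<noteq> e2"
    by (meson card_2_iff)
  then have "e1 \<in> F" "v \<in> e1" "e2 \<in> F" "v \<in> e2" by auto
  then obtain x y where F: "{x, v} \<in> F" "{y, v} \<in> F" and "x \<noteq> y"
    using edge_at_v e12(2) by metis
  have sub: "{x, y} \<subseteq> nbrs E v"
    using F tf unfolding two_factor_def nbrs_def by (auto simp: insert_commute)
  have "card (nbrs E v) = 3" using cb v unfolding cubic_bipartite_def by blast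
  then have "card (nbrs E v - {x, y}) = 1"
    using sub \<open>x \<noteq> y\<close> by (simp add: card_Diff_subset finite_subset)
  then obtain z where z: "nbrs E v - {x, y} = {z}" by (meson card_1_singletonE)
  then have "nbrs E v = {x, y, z}" using sub by blast
  moreover have "x \<noteq> z" "y \<noteq> z" using z by blast+
  ultimately show thesis using that \<open>x \<noteq> y\<close> F by blast
qed

lemma mu_set_bij: "\<mu> \<in> mu_set U V E F f \<Longrightarrow> bij_betw \<mu> (XX U V E) (YY U V E)"
  by (simp add: mu_set_def uniform_def perfect_matching_def)

lemma mu_set_hat_adj: "\<mu> \<in> mu_set U V E F f \<Longrightarrow> w \<in> XX U V E \<Longrightarrow> hat_adj E w (\<mu> w)"
  by (simp add: mu_set_def uniform_def perfect_matching_def)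

lemma mu_set_F_edge:
  assumes cb: "cubic_bipartite U V E" and \<mu>: "\<mu> \<in> mu_set U V E F f"
    and e: "{u, w} \<in> F" and w: "w \<in> V"
  shows "\<mu> (Outer w u (f {u, w})) = Outer u w (f {u, w})"
proof -
  have "{u, w} \<in> E" using \<mu> e unfolding mu_set_def F_of_def by blast
  then have "u \<in> U" using cubic_bipartite_nbrs(2)[OF cb] w by (simp add: nbrs_def)
  then have "u \<notin> V" using cb unfolding cubic_bipartite_def by blast
  have "edge_in U V E \<mu> {u, w} (f {u, w})" using \<mu> e unfolding mu_set_def by blast
  then obtain u' w' where "{u, w} = {u', w'}"
    and "(Outer w' u' (f {u, w}) \<in> XX U V E \<and> \<mu> (Outer w' u' (f {u, w})) = Outer u' w' (f {u, w})) \<or>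
         (Outer u' w' (f {u, w}) \<in> XX U V E \<and> \<mu> (Outer u' w' (f {u, w})) = Outer w' u' (f {u, w}))"
    unfolding edge_in_def by blast
  with \<open>u \<notin> V\<close> show ?thesis by (auto simp: doubleton_eq_iff)
qed

section \<open>Gadgets\<close>

definition even_subset :: "'v \<Rightarrow> 'v \<Rightarrow> 'v \<Rightarrow> bool \<Rightarrow> bool \<Rightarrow> 'v set" where
  "even_subset x y z p q =
     (if p then {x} else {}) \<union> (if q then {y} else {}) \<union> (if p \<noteq> q then {z} else {})"

lemma even_subset_mem:
  assumes "x \<noteq> y" "x \<noteq> z" "y \<noteq> z"
  shows "x \<in> even_subset x y z p q \<longleftrightarrow> p" and "y \<in> even_subset x y z p q \<longleftrightarrow> q"
    and "z \<in> even_subset x y z p q \<longleftrightarrow> p \<noteq> q"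
  using assms by (auto simp: even_subset_def)

lemma even_subset_inject:
  assumes "x \<noteq> y" "x \<noteq> z" "y \<noteq> z"
  shows "even_subset x y z p q = even_subset x y z p' q' \<longleftrightarrow> p = p' \<and> q = q'"
  using even_subset_mem(1,2)[OF assms, of p q] even_subset_mem(1,2)[OF assms, of p' q'] by blast

lemma even_subset_subset: "even_subset x y z p q \<subseteq> {x, y, z}"
  by (auto simp: even_subset_def)

lemma even_card_even_subset:
  assumes "x \<noteq> y" "x \<noteq> z" "y \<noteq> z"
  shows "even (card (even_subset x y z p q))"
  using assms by (cases p; cases q) (auto simp: even_subset_def)

lemma even_subset_cases:
  assumes d: "x \<noteq> y" "x \<noteq> z" "y \<noteq> z" and S: "S \<subseteq> {x, y, z}" and ev: "even (card S)"
  shows "S = even_subset x y z (x \<in> S) (y \<in> S)"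
proof -
  have "z \<in> S \<longleftrightarrow> (x \<in> S) \<noteq> (y \<in> S)"
  proof (cases "x \<in> S"; cases "y \<in> S"; cases "z \<in> S")
    assume "x \<in> S" "y \<in> S" "z \<in> S"
    then have "S = {x, y, z}" using S by blast
    then show ?thesis using ev d by simp
  next
    assume "x \<notin> S" "y \<notin> S" "z \<in> S"
    then have "S = {z}" using S by blast
    then show ?thesis using ev by simp
  next
    assume "x \<in> S" "y \<notin> S" "z \<notin> S"
    then have "S = {x}" using S by blast
    then show ?thesis using ev by simp
  next
    assume "x \<notin> S" "y \<in> S" "z \<notin> S"
    then have "S = {y}" using S by blast
    then show ?thesis using ev by simp
  qed simp_all
  then show ?thesis using S by (auto simp: even_subset_def)
qed

definition matched_by :: "'a set \<Rightarrow> ('a \<Rightarrow> 'b) \<Rightarrow> 'a \<Rightarrow> 'b \<Rightarrow> bool" where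
  "matched_by X \<mu> p q \<longleftrightarrow> \<mu> p = q \<and> inv_into X \<mu> q = p"

text \<open>
  Write \<open>A(p,q)\<close> for \<open>Inner v (even_subset x y z p q)\<close>. If \<open>Outer v x a\<close> and \<open>Outer v y b\<close>
  are taken by \<open>F\<close>-edges, \<open>A(a,b)\<close> is forced onto \<open>Outer v z (a \<noteq> b)\<close>, and the remaining
  vertices form the hexagon \<open>A(\<not>a,\<not>b) - Outer v x (\<not>a) - A(\<not>a,b) - Outer v z (a = b) -
  A(a,\<not>b) - Outer v y (\<not>b)\<close>; these are its two perfect matchings.
\<close>
definition gadget_matched ::
  "('v hvert \<Rightarrow> 'v hvert \<Rightarrow> bool) \<Rightarrow> 'v \<Rightarrow> 'v \<Rightarrow> 'v \<Rightarrow> 'v \<Rightarrow> bool \<Rightarrow> bool \<Rightarrow> bool" where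
  "gadget_matched M v x y z a b \<longleftrightarrow>
     M (Inner v (even_subset x y z a b)) (Outer v z (a \<noteq> b)) \<and>
     ((M (Inner v (even_subset x y z (\<not> a) (\<not> b))) (Outer v x (\<not> a)) \<and>
       M (Inner v (even_subset x y z (\<not> a) b)) (Outer v z (a = b)) \<and>
       M (Inner v (even_subset x y z a (\<not> b))) (Outer v y (\<not> b))) \<or>
      (M (Inner v (even_subset x y z (\<not> a) (\<not> b))) (Outer v y (\<not> b)) \<and>
       M (Inner v (even_subset x y z (\<not> a) b)) (Outer v x (\<not> a)) \<and>
       M (Inner v (even_subset x y z a (\<not> b))) (Outer v z (a = b))))"

lemma gadget_matchedI:
  fixes m :: "'v hvert \<Rightarrow> 'v hvert"
  assumes d: "x \<noteq> y" "x \<noteq> z" "y \<noteq> z"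
    and adj: "\<And>p q. \<exists>u \<in> {x, y, z}.
      m (Inner v (even_subset x y z p q)) = Outer v u (u \<in> even_subset x y z p q)"
    and avoid_x: "\<And>p q. m (Inner v (even_subset x y z p q)) \<noteq> Outer v x a"
    and avoid_y: "\<And>p q. m (Inner v (even_subset x y z p q)) \<noteq> Outer v y b"
    and inj: "\<And>p q p' q'. m (Inner v (even_subset x y z p q)) = m (Inner v (even_subset x y z p' q'))
      \<Longrightarrow> p = p' \<and> q = q'"
    and M: "\<And>p q. M (Inner v (even_subset x y z p q)) (m (Inner v (even_subset x y z p q)))"
  shows "gadget_matched M v x y z a b"
proof -
  define A where "A p q = Inner v (even_subset x y z p q)" for p q
  have opts: "m (A p q) = Outer v x p \<or> m (A p q) = Outer v y q \<or> m (A p q) = Outer v z (p \<noteq> q)"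
    for p q
    using adj[of p q] even_subset_mem[OF d] unfolding A_def by auto
  have m0: "m (A a b) = Outer v z (a \<noteq> b)"
    using opts[of a b] avoid_x avoid_y unfolding A_def by blast
  have "m (A (\<not> a) (\<not> b)) = Outer v x (\<not> a) \<or> m (A (\<not> a) (\<not> b)) = Outer v y (\<not> b)"
    using opts[of "\<not> a" "\<not> b"] m0 inj[of "\<not> a" "\<not> b" a b] unfolding A_def by auto
  moreover have "m (A (\<not> a) b) = Outer v x (\<not> a) \<or> m (A (\<not> a) b) = Outer v z (a = b)"
    using opts[of "\<not> a" b] avoid_y unfolding A_def by auto
  moreover have "m (A a (\<not> b)) = Outer v y (\<not> b) \<or> m (A a (\<not> b)) = Outer v z (a = b)"
    using opts[of a "\<not> b"] avoid_x unfolding A_def by auto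
  moreover have "m (A (\<not> a) (\<not> b)) \<noteq> m (A (\<not> a) b)" "m (A (\<not> a) (\<not> b)) \<noteq> m (A a (\<not> b))"
    "m (A (\<not> a) b) \<noteq> m (A a (\<not> b))"
    using inj unfolding A_def by blast+
  ultimately have
    "(m (A (\<not> a) (\<not> b)) = Outer v x (\<not> a) \<and> m (A (\<not> a) b) = Outer v z (a = b) \<and>
      m (A a (\<not> b)) = Outer v y (\<not> b)) \<or>
     (m (A (\<not> a) (\<not> b)) = Outer v y (\<not> b) \<and> m (A (\<not> a) b) = Outer v x (\<not> a) \<and>
      m (A a (\<not> b)) = Outer v z (a = b))"
    by auto
  then show ?thesis
    using m0 M unfolding gadget_matched_def A_def by metis
qed

lemma gadget_matched_cube_id_Inner:
  assumes "gadget_matched (matched_by X \<mu>1) v x y z a b"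
    and "gadget_matched (matched_by X \<mu>2) v x y z a b"
  shows "((inv_into X \<mu>1 \<circ> \<mu>2) ^^ 3) (Inner v (even_subset x y z p q)) =
         Inner v (even_subset x y z p q)"
  using assms
  by (cases "p = a"; cases "q = b")
    (auto simp: gadget_matched_def matched_by_def numeral_3_eq_3)

lemma gadget_matched_cube_id_Outer:
  assumes "gadget_matched (\<lambda>p q. matched_by X \<mu>1 q p) v x y z a b"
    and "gadget_matched (\<lambda>p q. matched_by X \<mu>2 q p) v x y z a b"
    and "u \<in> {x, y, z}" and "\<not> (u = x \<and> i = a)" and "\<not> (u = y \<and> i = b)"
  shows "((inv_into X \<mu>1 \<circ> \<mu>2) ^^ 3) (Outer v u i) = Outer v u i"
  using assms
  by (cases a; cases b; cases i)
    (auto simp: gadget_matched_def matched_by_def numeral_3_eq_3)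

lemma gadget_matched_U:
  assumes cb: "cubic_bipartite U V E" and \<mu>: "\<mu> \<in> mu_set U V E F f"
    and v: "v \<in> U" and N: "nbrs E v = {x, y, z}" and d: "x \<noteq> y" "x \<noteq> z" "y \<noteq> z"
    and F: "{x, v} \<in> F" "{y, v} \<in> F"
  shows "gadget_matched (matched_by (XX U V E) \<mu>) v x y z (f {x, v}) (f {y, v})"
proof -
  have inj: "inj_on \<mu> (XX U V E)" using mu_set_bij[OF \<mu>] by (rule bij_betw_imp_inj_on)
  have inX: "Inner v (even_subset x y z p q) \<in> XX U V E" for p q
    using v N even_subset_subset even_card_even_subset[OF d] by simp
  have avoid: "\<mu> (Inner v (even_subset x y z p q)) \<noteq> Outer v w (f {w, v})"
    if "w \<in> {x, y}" for w p q
  proof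
    assume "\<mu> (Inner v (even_subset x y z p q)) = Outer v w (f {w, v})"
    moreover have "w \<in> V" using that N v cubic_bipartite_nbrs(1)[OF cb] by auto
    moreover have "{v, w} \<in> F" using that F by (auto simp: insert_commute)
    ultimately have "\<mu> (Inner v (even_subset x y z p q)) = \<mu> (Outer w v (f {v, w}))"
      using mu_set_F_edge[OF cb \<mu>] by (simp add: insert_commute)
    moreover have "Outer w v (f {v, w}) \<in> XX U V E"
      using \<open>w \<in> V\<close> that N nbrs_sym[of v E] by auto
    ultimately show False using inj inX by (auto dest: inj_onD)
  qed
  show ?thesis
  proof (rule gadget_matchedI[OF d])
    fix p q
    show "\<exists>u \<in> {x, y, z}.
      \<mu> (Inner v (even_subset x y z p q)) = Outer v u (u \<in> even_subset x y z p q)"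
      using hat_adj_InnerD(1)[OF mu_set_hat_adj[OF \<mu> inX]] N by simp
    show "\<mu> (Inner v (even_subset x y z p q)) \<noteq> Outer v x (f {x, v})"
      and "\<mu> (Inner v (even_subset x y z p q)) \<noteq> Outer v y (f {y, v})"
      using avoid by blast+
    show "matched_by (XX U V E) \<mu> (Inner v (even_subset x y z p q)) (\<mu> (Inner v (even_subset x y z p q)))"
      using inj inX by (simp add: matched_by_def)
  next
    fix p q p' q'
    assume "\<mu> (Inner v (even_subset x y z p q)) = \<mu> (Inner v (even_subset x y z p' q'))"
    then show "p = p' \<and> q = q'"
      using inj inX even_subset_inject[OF d] by (auto dest: inj_onD)
  qed
qed

lemma gadget_matched_V:
  assumes cb: "cubic_bipartite U V E" and \<mu>: "\<mu> \<in> mu_set U V E F f"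
    and v: "v \<in> V" and N: "nbrs E v = {x, y, z}" and d: "x \<noteq> y" "x \<noteq> z" "y \<noteq> z"
    and F: "{x, v} \<in> F" "{y, v} \<in> F"
  shows "gadget_matched (\<lambda>p q. matched_by (XX U V E) \<mu> q p) v x y z (f {x, v}) (f {y, v})"
proof -
  define \<mu>' where "\<mu>' = inv_into (XX U V E) \<mu>"
  have img: "\<mu> ` XX U V E = YY U V E" using mu_set_bij[OF \<mu>] by (simp add: bij_betw_def)
  have inY: "Inner v (even_subset x y z p q) \<in> YY U V E" for p q
    using v N even_subset_subset even_card_even_subset[OF d] by simp
  have \<mu>'X: "\<mu>' (Inner v (even_subset x y z p q)) \<in> XX U V E"
    and \<mu>_\<mu>': "\<mu> (\<mu>' (Inner v (even_subset x y z p q))) = Inner v (even_subset x y z p q)" for p q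
    unfolding \<mu>'_def using inY img by (metis inv_into_into, metis f_inv_into_f)
  have avoid: "\<mu>' (Inner v (even_subset x y z p q)) \<noteq> Outer v w (f {w, v})"
    if "w \<in> {x, y}" for w p q
  proof
    assume "\<mu>' (Inner v (even_subset x y z p q)) = Outer v w (f {w, v})"
    moreover have "\<mu> (Outer v w (f {w, v})) = Outer w v (f {w, v})"
      using that F mu_set_F_edge[OF cb \<mu> _ v] by blast
    ultimately show False using \<mu>_\<mu>'[of p q] by simp
  qed
  show ?thesis
  proof (rule gadget_matchedI[OF d, where m = \<mu>'])
    fix p q
    show "\<exists>u \<in> {x, y, z}.
      \<mu>' (Inner v (even_subset x y z p q)) = Outer v u (u \<in> even_subset x y z p q)"
      using hat_adj_InnerD(2) mu_set_hat_adj[OF \<mu> \<mu>'X[of p q]] \<mu>_\<mu>'[of p q] N by metis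
    show "\<mu>' (Inner v (even_subset x y z p q)) \<noteq> Outer v x (f {x, v})"
      and "\<mu>' (Inner v (even_subset x y z p q)) \<noteq> Outer v y (f {y, v})"
      using avoid by blast+
    show "matched_by (XX U V E) \<mu> (\<mu>' (Inner v (even_subset x y z p q))) (Inner v (even_subset x y z p q))"
      using \<mu>_\<mu>' by (simp add: matched_by_def \<mu>'_def)
  next
    fix p q p' q'
    assume "\<mu>' (Inner v (even_subset x y z p q)) = \<mu>' (Inner v (even_subset x y z p' q'))"
    then show "p = p' \<and> q = q'"
      using \<mu>_\<mu>' even_subset_inject[OF d] by (metis hvert.inject(1))
  qed
qed

lemma mu_set_cube_id:
  assumes cb: "cubic_bipartite U V E" and tf: "two_factor U V E F"
    and \<mu>1: "\<mu>1 \<in> mu_set U V E F f" and \<mu>2: "\<mu>2 \<in> mu_set U V E F f"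
    and w: "w \<in> XX U V E"
  shows "((inv_into (XX U V E) \<mu>1 \<circ> \<mu>2) ^^ 3) w = w"
proof (cases w)
  case (Inner v S)
  with w have v: "v \<in> U" and S: "S \<subseteq> nbrs E v" "even (card S)" by auto
  obtain x y z where N: "nbrs E v = {x, y, z}" and d: "x \<noteq> y" "x \<noteq> z" "y \<noteq> z"
    and F: "{x, v} \<in> F" "{y, v} \<in> F"
    using two_factor_nbrs[OF cb tf] v by blast
  have "S = even_subset x y z (x \<in> S) (y \<in> S)"
    using even_subset_cases[OF d] S N by simp
  then show ?thesis
    using gadget_matched_cube_id_Inner[OF gadget_matched_U[OF cb \<mu>1 v N d F]
        gadget_matched_U[OF cb \<mu>2 v N d F]] Inner
    by metis
next
  case (Outer v u i)
  with w have v: "v \<in> V" and u: "u \<in> nbrs E v" by auto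
  obtain x y z where N: "nbrs E v = {x, y, z}" and d: "x \<noteq> y" "x \<noteq> z" "y \<noteq> z"
    and F: "{x, v} \<in> F" "{y, v} \<in> F"
    using two_factor_nbrs[OF cb tf] v by blast
  show ?thesis
  proof (cases "(u = x \<and> i = f {x, v}) \<or> (u = y \<and> i = f {y, v})")
    case True
    then have "{u, v} \<in> F" and "i = f {u, v}" using F by auto
    then have "\<mu>1 w = \<mu>2 w"
      using mu_set_F_edge[OF cb \<mu>1 _ v] mu_set_F_edge[OF cb \<mu>2 _ v] Outer by simp
    then have "(inv_into (XX U V E) \<mu>1 \<circ> \<mu>2) w = w"
      using w bij_betw_imp_inj_on[OF mu_set_bij[OF \<mu>1]] by (metis comp_apply inv_into_f_f)
    then show ?thesis by (simp add: numeral_3_eq_3)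
  next
    case False
    then show ?thesis
      using gadget_matched_cube_id_Outer[OF gadget_matched_V[OF cb \<mu>1 v N d F]
          gadget_matched_V[OF cb \<mu>2 v N d F]] Outer u N
      by blast
  qed
qed

theorem mainTheorem4:
  fixes U V :: "'v set" and E :: "'v set set"
    and \<eta> \<eta>' :: "'v hvert \<Rightarrow> nat"
    and F :: "'v set set" and f :: "'v set \<Rightarrow> bool"
    and \<mu>1 \<mu>2 :: "'v hvert \<Rightarrow> 'v hvert"
  assumes "cubic_bipartite U V E"
    and "bij_betw \<eta> (XX U V E) {1..card (XX U V E)}"
    and "bij_betw \<eta>' (YY U V E) {1..card (XX U V E)}"
    and "two_factor U V E F"
    and "\<mu>1 \<in> mu_set U V E F f" and "\<mu>2 \<in> mu_set U V E F f"
  shows "match_sign U V E \<eta> \<eta>' \<mu>1 = match_sign U V E \<eta> \<eta>' \<mu>2"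
  unfolding match_sign_def
  using relabelled_sign_eq[OF assms(2,3) _ mu_set_bij[OF assms(5)] mu_set_bij[OF assms(6)]]
    mu_set_cube_id[OF assms(1,4,5,6)]
  by simp

end
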